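(* Let $A$ be a general metric space, $\mathcal F$ a weakly flat filter on $A$ and $M$ a left module on $A$ such that $M^-(\mathcal F)(x)<M(x)$ for some $x\in A$. Then there is a forward Cauchy sequence $(y_n)$ in $A$ such that $(y_n)\to\mathcal F$ and $M^-((y_n))(x)<M(x)$ for some $x\in A$ (where $M^-((y_n))$ is $M^-$ of the filter of the sequence).
   Context: A general metric space $A$ is a set with $A(-,-):A\times A\to[0,\infty]$, $A(x,x)=0$, $A(x,z)\le A(x,y)+A(y,z)$. A left module is $M:A\to[0,\infty]$ with $M(x)\le M(y)+A(x,y)$. A filter on $A$ is a nonempty set of nonempty subsets closed under finite intersections and supersets; $M^-(\mathcal F)(x)=\sup_{f\in\mathcal F}\inf_{y\in f}A(x,y)$. $\mathcal F$ is weakly flat iff for every $\epsilon>0$ there is $f\in\mathcal F$ such that for all $x\in f$ and all $g\in\mathcal F$ there is $y\in g$ with $A(x,y)\le\epsilon$. For weakly flat filters, $\mathcal F_1\to\mathcal F_2$ iff for every $\epsilon>0$ there is $f\in\mathcal F_1$ such that for every $x\in f$ and every $g\in\mathcal F_2$ there is $y\in g$ with $A(x,y)\le\epsilon$. The filter of a sequence $(y_n)$ is generated by the tails $\{y_p:p\ge n\}$; $(y_n)$ is forward Cauchy iff for every $\epsilon>0$ there is $N$ with $A(y_n,y_m)\le\epsilon$ whenever $m\ge n\ge N$. *)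

theory Defs
  imports Main "HOL-Library.Extended_Nonnegative_Real"
begin

definition gen_metric :: "('a \<Rightarrow> 'a \<Rightarrow> ennreal) \<Rightarrow> bool" where
  "gen_metric d \<longleftrightarrow> (\<forall>x. d x x = 0) \<and> (\<forall>x y z. d x z \<le> d x y + d y z)"

definition left_module :: "('a \<Rightarrow> 'a \<Rightarrow> ennreal) \<Rightarrow> ('a \<Rightarrow> ennreal) \<Rightarrow> bool" where
  "left_module d M \<longleftrightarrow> (\<forall>x y. M x \<le> M y + d x y)"

definition fsets :: "'a filter \<Rightarrow> 'a set set" where
  "fsets F = {f. eventually (\<lambda>y. y \<in> f) F}"

definition Mminus :: "('a \<Rightarrow> 'a \<Rightarrow> ennreal) \<Rightarrow> 'a filter \<Rightarrow> 'a \<Rightarrow> ennreal" where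
  "Mminus d F x = (SUP f \<in> fsets F. INF y \<in> f. d x y)"

definition weakly_flat :: "('a \<Rightarrow> 'a \<Rightarrow> ennreal) \<Rightarrow> 'a filter \<Rightarrow> bool" where
  "weakly_flat d F \<longleftrightarrow> (\<forall>\<epsilon>::real. \<epsilon> > 0 \<longrightarrow>
     (\<exists>f \<in> fsets F. \<forall>x \<in> f. \<forall>g \<in> fsets F. \<exists>y \<in> g. d x y \<le> ennreal \<epsilon>))"

definition filter_conv :: "('a \<Rightarrow> 'a \<Rightarrow> ennreal) \<Rightarrow> 'a filter \<Rightarrow> 'a filter \<Rightarrow> bool" where
  "filter_conv d F1 F2 \<longleftrightarrow> (\<forall>\<epsilon>::real. \<epsilon> > 0 \<longrightarrow>
     (\<exists>f \<in> fsets F1. \<forall>x \<in> f. \<forall>g \<in> fsets F2. \<exists>y \<in> g. d x y \<le> ennreal \<epsilon>))"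

definition seq_filter :: "(nat \<Rightarrow> 'a) \<Rightarrow> 'a filter" where
  "seq_filter y = filtermap y sequentially"

definition forward_cauchy :: "('a \<Rightarrow> 'a \<Rightarrow> ennreal) \<Rightarrow> (nat \<Rightarrow> 'a) \<Rightarrow> bool" where
  "forward_cauchy d y \<longleftrightarrow> (\<forall>\<epsilon>::real. \<epsilon> > 0 \<longrightarrow>
     (\<exists>N. \<forall>n m. N \<le> n \<longrightarrow> n \<le> m \<longrightarrow> d (y n) (y m) \<le> ennreal \<epsilon>))"

end

theory Submission
  imports Defs
begin

text \<open>
  Fix \<open>x\<close> with \<open>M\<^sup>-(\<F>)(x) < M(x)\<close>, reals \<open>a\<close> and \<open>\<delta> > 0\<close> with \<open>M\<^sup>-(\<F>)(x) < a\<close> and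
  \<open>a + \<delta> < M(x)\<close>, and a strictly decreasing null sequence \<open>c\<close> with \<open>c 0 = \<delta>\<close>.
  Weak flatness gives members \<open>S n\<close> of \<open>\<F>\<close> whose points are within \<open>c n - c (n+1)\<close>
  of every member of \<open>\<F>\<close>, in particular of some point of \<open>S (n+1)\<close>. Start with
  \<open>y 0 \<in> S 0\<close> such that \<open>A(x, y 0) < a\<close> and choose \<open>y (n+1) \<in> S (n+1)\<close> within
  \<open>c n - c (n+1)\<close> of \<open>y n\<close>. The distances telescope, \<open>A(y n, y m) \<le> c n - c m\<close> for
  \<open>n \<le> m\<close>, so the sequence is forward Cauchy, its tails are uniformly close to \<open>\<F>\<close>,
  and \<open>A(x, y n) \<le> a + \<delta>\<close>. Since \<open>M\<^sup>-\<close> of a filter is the liminf of the distance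
  along the filter, \<open>M\<^sup>-((y n))(x) \<le> a + \<delta> < M(x)\<close>.
\<close>

definition near_filter :: "('a \<Rightarrow> 'a \<Rightarrow> ennreal) \<Rightarrow> 'a filter \<Rightarrow> real \<Rightarrow> 'a \<Rightarrow> bool" where
  "near_filter d F \<epsilon> x \<longleftrightarrow> (\<forall>g \<in> fsets F. \<exists>y \<in> g. d x y \<le> ennreal \<epsilon>)"

lemma near_filter_mono: "near_filter d F \<epsilon> x \<Longrightarrow> \<epsilon> \<le> \<epsilon>' \<Longrightarrow> near_filter d F \<epsilon>' x"
  unfolding near_filter_def by (meson ennreal_leI order.trans)

lemma weakly_flat_near_filter:
  "weakly_flat d F \<longleftrightarrow> (\<forall>\<epsilon>>0. \<exists>f \<in> fsets F. \<forall>x \<in> f. near_filter d F \<epsilon> x)"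
  unfolding weakly_flat_def near_filter_def ..

lemma fsets_seq_filter: "f \<in> fsets (seq_filter y) \<longleftrightarrow> (\<exists>N. \<forall>n\<ge>N. y n \<in> f)"
  unfolding fsets_def seq_filter_def eventually_filtermap eventually_sequentially by simp

lemma filter_conv_seq_filterI:
  assumes "\<And>\<epsilon>. \<epsilon> > 0 \<Longrightarrow> \<exists>N. \<forall>n\<ge>N. near_filter d F \<epsilon> (y n)"
  shows "filter_conv d (seq_filter y) F"
  unfolding filter_conv_def
proof (intro allI impI)
  fix \<epsilon> :: real assume "\<epsilon> > 0"
  then obtain N where "\<forall>n\<ge>N. near_filter d F \<epsilon> (y n)" using assms by blast
  then have "\<forall>x \<in> y ` {N..}. near_filter d F \<epsilon> x" by auto
  moreover have "y ` {N..} \<in> fsets (seq_filter y)" unfolding fsets_seq_filter by auto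
  ultimately show "\<exists>f \<in> fsets (seq_filter y). \<forall>x \<in> f. \<forall>g \<in> fsets F. \<exists>z \<in> g. d x z \<le> ennreal \<epsilon>"
    unfolding near_filter_def by (intro bexI)
qed

lemma Mminus_eq_Liminf: "Mminus d F x = Liminf F (d x)"
proof -
  have "fsets F = Collect ` {P. eventually P F}"
    unfolding fsets_def by (auto simp: image_iff)
  then show ?thesis
    unfolding Mminus_def Liminf_def by (simp add: image_comp comp_def)
qed

lemma Mminus_lessD:
  assumes "Mminus d F x < c" "f \<in> fsets F"
  shows "\<exists>y \<in> f. d x y < c"
proof -
  have "(INF y \<in> f. d x y) \<le> Mminus d F x"
    unfolding Mminus_def using assms(2) by (rule SUP_upper)
  then have "(INF y \<in> f. d x y) < c" using assms(1) by (rule order.strict_trans1)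
  then show ?thesis by (simp add: INF_less_iff)
qed

lemma gen_metric_telescope:
  assumes "gen_metric d" "decseq c"
    and steps: "\<And>k. d (y k) (y (Suc k)) \<le> ennreal (c k - c (Suc k))"
    and "n \<le> m"
  shows "d (y n) (y m) \<le> ennreal (c n - c m)"
  using \<open>n \<le> m\<close>
proof (induction m rule: dec_induct)
  case base
  then show ?case using assms(1) unfolding gen_metric_def by simp
next
  case (step m)
  have "d (y n) (y (Suc m)) \<le> d (y n) (y m) + d (y m) (y (Suc m))"
    using assms(1) unfolding gen_metric_def by blast
  also have "\<dots> \<le> ennreal (c n - c m) + ennreal (c m - c (Suc m))"
    using step.IH steps by (rule add_mono)
  also have "\<dots> = ennreal (c n - c (Suc m))"
    using \<open>decseq c\<close> step.hyps by (simp add: decseq_def ennreal_plus[symmetric])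
  finally show ?case .
qed

lemma forward_cauchyI:
  assumes "\<And>n m. n \<le> m \<Longrightarrow> d (y n) (y m) \<le> ennreal (c n)" "c \<longlonglongrightarrow> 0"
  shows "forward_cauchy d y"
  unfolding forward_cauchy_def
proof (intro allI impI)
  fix \<epsilon> :: real assume "\<epsilon> > 0"
  then obtain N where N: "\<forall>n\<ge>N. c n < \<epsilon>"
    using order_tendstoD(2)[OF assms(2)] eventually_sequentially by metis
  have "d (y n) (y m) \<le> ennreal \<epsilon>" if "N \<le> n" "n \<le> m" for n m
    using assms(1)[OF \<open>n \<le> m\<close>] N that by (meson ennreal_leI less_imp_le order.trans)
  then show "\<exists>N. \<forall>n m. N \<le> n \<longrightarrow> n \<le> m \<longrightarrow> d (y n) (y m) \<le> ennreal \<epsilon>" by blast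
qed

lemma near_filter_chain_exists:
  assumes "\<And>n. S n \<in> fsets F" "\<And>n x. x \<in> S n \<Longrightarrow> near_filter d F (e n) x" "y0 \<in> S 0"
  shows "\<exists>y. y 0 = y0 \<and> (\<forall>n. y n \<in> S n \<and> d (y n) (y (Suc n)) \<le> ennreal (e n))"
proof -
  have "\<exists>y. \<forall>n. (y n \<in> S n \<and> (n = 0 \<longrightarrow> y n = y0)) \<and> d (y n) (y (Suc n)) \<le> ennreal (e n)"
  proof (rule dependent_nat_choice)
    fix x n assume "x \<in> S n \<and> (n = 0 \<longrightarrow> x = y0)"
    then show "\<exists>z. (z \<in> S (Suc n) \<and> (Suc n = 0 \<longrightarrow> z = y0)) \<and> d x z \<le> ennreal (e n)"
      using assms(1,2) unfolding near_filter_def by blast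
  qed (use assms(3) in blast)
  then show ?thesis by blast
qed

lemma weakly_flat_Cauchy_chain:
  assumes "gen_metric d" "weakly_flat d F" "Mminus d F x0 < a"
    and c_dec: "\<And>n. c (Suc n) < c n" and c_lim: "c \<longlonglongrightarrow> 0"
  shows "\<exists>y. forward_cauchy d y \<and> filter_conv d (seq_filter y) F
           \<and> (\<forall>n. d x0 (y n) \<le> a + ennreal (c 0))"
proof -
  have "decseq c" using c_dec by (simp add: decseq_Suc_iff less_imp_le)
  then have c_nonneg: "0 \<le> c n" for n using c_lim by (rule decseq_ge)
  define e where "e n = c n - c (Suc n)" for n
  have "\<forall>n. \<exists>f \<in> fsets F. \<forall>x \<in> f. near_filter d F (e n) x"
    using assms(2) c_dec unfolding weakly_flat_near_filter e_def by simp
  then obtain S where S: "\<And>n. S n \<in> fsets F" "\<And>n x. x \<in> S n \<Longrightarrow> near_filter d F (e n) x"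
    by metis
  obtain y0 where y0: "y0 \<in> S 0" "d x0 y0 < a" using Mminus_lessD[OF assms(3) S(1)] by blast
  obtain y where y: "y 0 = y0" "\<And>n. y n \<in> S n" "\<And>n. d (y n) (y (Suc n)) \<le> ennreal (e n)"
    using near_filter_chain_exists[of S F d e, OF S y0(1)] by blast
  have dist: "d (y n) (y m) \<le> ennreal (c n)" if "n \<le> m" for n m
  proof -
    have "d (y n) (y m) \<le> ennreal (c n - c m)"
      using assms(1) \<open>decseq c\<close> y(3)[unfolded e_def] that by (rule gen_metric_telescope)
    also have "\<dots> \<le> ennreal (c n)" using c_nonneg[of m] by (intro ennreal_leI) simp
    finally show ?thesis .
  qed
  have conv: "filter_conv d (seq_filter y) F"
  proof (rule filter_conv_seq_filterI)
    fix \<epsilon> :: real assume "\<epsilon> > 0"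
    then obtain N where "\<forall>n\<ge>N. c n < \<epsilon>"
      using order_tendstoD(2)[OF c_lim] eventually_sequentially by metis
    moreover have "e n \<le> c n" for n using c_nonneg[of "Suc n"] unfolding e_def by simp
    ultimately have "\<forall>n\<ge>N. e n \<le> \<epsilon>" by (meson less_imp_le order.trans)
    then show "\<exists>N. \<forall>n\<ge>N. near_filter d F \<epsilon> (y n)"
      using near_filter_mono[OF S(2)[OF y(2)]] by blast
  qed
  have bound: "d x0 (y n) \<le> a + ennreal (c 0)" for n
  proof -
    have "d x0 (y n) \<le> d x0 y0 + d y0 (y n)" using assms(1) unfolding gen_metric_def by blast
    also have "\<dots> \<le> a + ennreal (c 0)"
      using less_imp_le[OF y0(2)] dist[OF le0] unfolding y(1) by (rule add_mono)
    finally show ?thesis .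
  qed
  show ?thesis using forward_cauchyI[of d y c, OF dist c_lim] conv bound by blast
qed

lemma ennreal_less_gap:
  fixes u v :: ennreal
  assumes "u < v"
  obtains c :: ennreal and \<delta> :: real where "\<delta> > 0" "u < c" "c + ennreal \<delta> < v"
proof -
  obtain c where c: "u < c" "c < v" using dense[OF assms] by blast
  obtain c' where c': "c < c'" "c' < v" using dense[OF c(2)] by blast
  have "c' < top" using c'(2) top_greatest by (rule less_le_trans)
  moreover from this have "c < top" using c'(1) by simp
  ultimately obtain a b where ab: "c = ennreal a" "c' = ennreal b" "0 \<le> a" "0 \<le> b"
    by (auto simp: less_top_ennreal)
  have "a < b" using ab c' by (simp add: ennreal_less_iff)
  then have "c + ennreal (b - a) = c'" using ab by (simp add: ennreal_plus[symmetric])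
  then show ?thesis using that[of "b - a" c] \<open>a < b\<close> c c' by simp
qed

theorem mainTheorem13:
  fixes d :: "'a \<Rightarrow> 'a \<Rightarrow> ennreal" and M :: "'a \<Rightarrow> ennreal" and F :: "'a filter"
  assumes "gen_metric d"
    and "F \<noteq> bot"
    and "weakly_flat d F"
    and "left_module d M"
    and "\<exists>x. Mminus d F x < M x"
  shows "\<exists>y :: nat \<Rightarrow> 'a. forward_cauchy d y \<and> filter_conv d (seq_filter y) F
           \<and> (\<exists>x. Mminus d (seq_filter y) x < M x)"
proof -
  obtain x0 where "Mminus d F x0 < M x0" using assms(5) by blast
  then obtain a \<delta> where \<delta>: "\<delta> > 0" "Mminus d F x0 < a" "a + ennreal \<delta> < M x0"
    by (rule ennreal_less_gap)
  define c where "c n = \<delta> / 2 ^ n" for n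
  have c_dec: "c (Suc n) < c n" for n using \<delta>(1) by (simp add: c_def divide_strict_left_mono)
  have c_lim: "c \<longlonglongrightarrow> 0" unfolding c_def by (rule LIMSEQ_divide_realpow_zero) simp
  have c0: "c 0 = \<delta>" by (simp add: c_def)
  obtain y where y: "forward_cauchy d y" "filter_conv d (seq_filter y) F"
    "\<forall>n. d x0 (y n) \<le> a + ennreal (c 0)"
    using weakly_flat_Cauchy_chain[OF assms(1,3) \<delta>(2) c_dec c_lim] by blast
  have "Mminus d (seq_filter y) x0 \<le> a + ennreal \<delta>"
    unfolding Mminus_eq_Liminf seq_filter_def c0[symmetric]
    using y(3) by (intro Liminf_le) (simp_all add: filtermap_bot_iff eventually_filtermap)
  then show ?thesis using y(1,2) \<delta>(3) by (meson order.strict_trans1)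
qed

end
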